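(* Let $\mathcal{S}$ be a normal SPN over Boolean variables $X_1,\ldots,X_N$ and let $\mathcal{B}$ be the Bayesian network with ADD CPDs constructed from $\mathcal{S}$ as described in the context. Then $|\mathcal{B}|=O(N|\mathcal{S}|)$.
   Context: SPNs. Let $X_1,\ldots,X_N$ be Boolean variables. An SPN is a finite rooted DAG whose internal nodes are sum and product nodes, each edge $(v,u)$ out of a sum node carrying a weight $w_{v,u}\ge 0$, and whose terminal nodes are indicators $\mathbb{I}_{x_n},\mathbb{I}_{\bar x_n}$ or univariate distribution nodes over some $X_n$ with parameter $p\in[0,1]$. The scope of a terminal node over $X_n$ is $\{X_n\}$; an internal node's scope is the union of its children's scopes. The SPN is over $X_1,\ldots,X_N$ if the root's scope is $\{X_1,\ldots,X_N\}$. It is normal if (1) it is complete (children of each sum node have equal scopes) and decomposable (children of each product node have pairwise disjoint scopes); (2) the weights leaving each sum node are nonnegative and sum to 1; (3) every terminal node is a univariate distribution node and every sum node has scope size at least 2. $|\mathcal{S}|$ is the number of nodes plus edges. Construction. From a normal SPN $\mathcal{S}$ over $X_1,\ldots,X_N$ build a Bayesian network $\mathcal{B}$: its variables are $X_1,\ldots,X_N$ and, for each sum node $v$ with children $u_1,\ldots,u_l$, a hidden variable $H_v$ with values $\{1,\ldots,l\}$; its edges are exactly $H_v\to X$ for each sum node $v$ and each $X\in\mathrm{scope}(v)$. The CPD of $H_v$ is the decision stump ADD $\mathcal{A}_{H_v}$ (root labelled $H_v$, $i$-th edge to a terminal with value $w_{v,u_i}$). The CPD of $X$ is the ADD $\mathcal{A}_X$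 obtained by taking the subgraph of $\mathcal{S}$ induced by the nodes whose scope contains $X$, contracting every product node (each has a unique child there; connect its parents to that child and delete it), turning each sum node $v$ into an ADD node labelled $H_v$ whose $i$-th out-edge goes to the image of its $i$-th child, and keeping each terminal node (a distribution over $X$) as an ADD terminal. The size $|\mathcal{B}|$ is the number of nodes plus edges of the DAG of $\mathcal{B}$ plus the sizes (nodes plus edges) of all ADDs $\mathcal{A}_{H_v}$ and $\mathcal{A}_X$. *)

theory Defs
  imports Complex_Main
begin

(* Terminal nodes: indicators I_{x_n} (Ind n True),
   I_{\bar x_n} (Ind n False), or univariate (Bernoulli) distribution nodes
   over X_n with parameter p (Dist n p). Variables are X_1..X_N, indexed 1..N. *)
datatype node_kind = SumN | ProdN | Ind nat bool | Dist nat real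

(* An SPN: nodes are natural numbers; ch v is the ordered list of children
   (the i-th child of a sum node v is ch v ! i); wt v u is the weight of
   the edge (v,u) out of a sum node. *)
record spn =
  nodes :: "nat set"
  root  :: nat
  kind  :: "nat \<Rightarrow> node_kind"
  ch    :: "nat \<Rightarrow> nat list"
  wt    :: "nat \<Rightarrow> nat \<Rightarrow> real"

definition spn_edges :: "spn \<Rightarrow> (nat \<times> nat) set" where
  "spn_edges S = {(v,u). v \<in> nodes S \<and> u \<in> set (ch S v)}"

definition is_internal :: "spn \<Rightarrow> nat \<Rightarrow> bool" where
  "is_internal S v \<longleftrightarrow> kind S v = SumN \<or> kind S v = ProdN"

definition spn_wf :: "spn \<Rightarrow> bool" where
  "spn_wf S \<longleftrightarrow>
     finite (nodes S) \<and> root S \<in> nodes S \<and>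
     (\<forall>v\<in>nodes S. set (ch S v) \<subseteq> nodes S \<and> distinct (ch S v)) \<and>
     acyclic (spn_edges S) \<and>
     (\<forall>v\<in>nodes S. (root S, v) \<in> (spn_edges S)\<^sup>*) \<and>
     (\<forall>v\<in>nodes S. \<not> is_internal S v \<longrightarrow> ch S v = []) \<and>
     (\<forall>v\<in>nodes S. \<forall>n p. kind S v = Dist n p \<longrightarrow> 0 \<le> p \<and> p \<le> 1)"

inductive in_scope :: "spn \<Rightarrow> nat \<Rightarrow> nat \<Rightarrow> bool" for S where
  ind:  "v \<in> nodes S \<Longrightarrow> kind S v = Ind n b \<Longrightarrow> in_scope S v n"
| dist: "v \<in> nodes S \<Longrightarrow> kind S v = Dist n p \<Longrightarrow> in_scope S v n"
| inner: "v \<in> nodes S \<Longrightarrow> is_internal S v \<Longrightarrow> u \<in> set (ch S v) \<Longrightarrow>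
          in_scope S u n \<Longrightarrow> in_scope S v n"

definition scope :: "spn \<Rightarrow> nat \<Rightarrow> nat set" where
  "scope S v = {n. in_scope S v n}"

definition spn_over :: "nat \<Rightarrow> spn \<Rightarrow> bool" where
  "spn_over N S \<longleftrightarrow> spn_wf S \<and> scope S (root S) = {1..N}"

definition complete :: "spn \<Rightarrow> bool" where
  "complete S \<longleftrightarrow> (\<forall>v\<in>nodes S. kind S v = SumN \<longrightarrow>
      (\<forall>u\<in>set (ch S v). \<forall>u'\<in>set (ch S v). scope S u = scope S u'))"

definition decomposable :: "spn \<Rightarrow> bool" where
  "decomposable S \<longleftrightarrow> (\<forall>v\<in>nodes S. kind S v = ProdN \<longrightarrow>
      (\<forall>i j. i < length (ch S v) \<and> j < length (ch S v) \<and> i \<noteq> j \<longrightarrow>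
         scope S (ch S v ! i) \<inter> scope S (ch S v ! j) = {}))"

definition normal_spn :: "nat \<Rightarrow> spn \<Rightarrow> bool" where
  "normal_spn N S \<longleftrightarrow> spn_over N S \<and> complete S \<and> decomposable S \<and>
     (\<forall>v\<in>nodes S. kind S v = SumN \<longrightarrow>
        (\<forall>u\<in>set (ch S v). 0 \<le> wt S v u) \<and> (\<Sum>u\<in>set (ch S v). wt S v u) = 1) \<and>
     (\<forall>v\<in>nodes S. \<not> is_internal S v \<longrightarrow> (\<exists>n p. kind S v = Dist n p)) \<and>
     (\<forall>v\<in>nodes S. kind S v = SumN \<longrightarrow> card (scope S v) \<ge> 2)"

definition spn_size :: "spn \<Rightarrow> nat" where
  "spn_size S = card (nodes S) + card (spn_edges S)"

(* Algebraic decision diagrams as graphs: a node set and a set of labelled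
   edges (a, i, b) meaning "the i-th out-edge of a goes to b". *)
record 'n add =
  add_nodes :: "'n set"
  add_edges :: "('n \<times> nat \<times> 'n) set"

definition add_size :: "'n add \<Rightarrow> nat" where
  "add_size A = card (add_nodes A) + card (add_edges A)"

(* Decision stump CPD of H_v: root (None) with i-th edge to terminal Some i
   (carrying the value w_{v,u_i}); one terminal per child. *)
definition stump_add :: "spn \<Rightarrow> nat \<Rightarrow> nat option add" where
  "stump_add S v = \<lparr> add_nodes = insert None (Some ` {..<length (ch S v)}),
                     add_edges = {(None, i, Some i) | i. i < length (ch S v)} \<rparr>"

definition nodes_with :: "spn \<Rightarrow> nat \<Rightarrow> nat set" where
  "nodes_with S n = {u \<in> nodes S. n \<in> scope S u}"

(* contr S n u w : in the subgraph induced by nodes_with S n, w is the image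
   of u under contraction of product nodes (follow the unique child in the
   subgraph through product nodes until reaching a non-product node). *)
inductive contr :: "spn \<Rightarrow> nat \<Rightarrow> nat \<Rightarrow> nat \<Rightarrow> bool" for S n where
  stop: "u \<in> nodes_with S n \<Longrightarrow> kind S u \<noteq> ProdN \<Longrightarrow> contr S n u u"
| step: "u \<in> nodes_with S n \<Longrightarrow> kind S u = ProdN \<Longrightarrow> u' \<in> set (ch S u) \<Longrightarrow>
         u' \<in> nodes_with S n \<Longrightarrow> contr S n u' w \<Longrightarrow> contr S n u w"

definition var_add :: "spn \<Rightarrow> nat \<Rightarrow> nat add" where
  "var_add S n = \<lparr> add_nodes = {u \<in> nodes_with S n. kind S u \<noteq> ProdN},
      add_edges = {(v, i, w) | v i w. v \<in> nodes_with S n \<and> kind S v = SumN \<and>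
                    i < length (ch S v) \<and> contr S n (ch S v ! i) w} \<rparr>"

definition sum_nodes :: "spn \<Rightarrow> nat set" where
  "sum_nodes S = {v \<in> nodes S. kind S v = SumN}"

(* DAG of the Bayesian network: Inl n is X_n (1 \<le> n \<le> N), Inr v is H_v;
   edges H_v \<rightarrow> X for X in scope(v). *)
definition bn_dag_nodes :: "nat \<Rightarrow> spn \<Rightarrow> (nat + nat) set" where
  "bn_dag_nodes N S = Inl ` {1..N} \<union> Inr ` sum_nodes S"

definition bn_dag_edges :: "spn \<Rightarrow> ((nat + nat) \<times> (nat + nat)) set" where
  "bn_dag_edges S = {(Inr v, Inl n) | v n. v \<in> sum_nodes S \<and> n \<in> scope S v}"

definition bn_size :: "nat \<Rightarrow> spn \<Rightarrow> nat" where
  "bn_size N S = card (bn_dag_nodes N S) + card (bn_dag_edges S)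
     + (\<Sum>v\<in>sum_nodes S. add_size (stump_add S v))
     + (\<Sum>n\<in>{1..N}. add_size (var_add S n))"

end

theory Submission
  imports Defs
begin

text \<open>
  Restricting \<open>S\<close> to the nodes whose scope contains \<open>X\<^sub>n\<close> and contracting product nodes keeps
  only nodes of \<open>S\<close>, and every edge of the resulting ADD is labelled by an SPN edge \<open>(v, i)\<close>
  out of a sum node. By decomposability a product node has at most one child whose scope
  contains \<open>X\<^sub>n\<close>, so contraction is deterministic and the label determines the edge; hence
  each of the \<open>N\<close> variable CPDs has size at most \<open>|S|\<close>. The decision stumps together have
  size at most \<open>2|S|\<close>, and the network DAG has at most \<open>N + |S|\<close> nodes and \<open>N|S|\<close> edges,
  as every variable labels a leaf of \<open>S\<close>. Summing gives \<open>|B| \<le> 6N|S|\<close>.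
\<close>

lemma spn_edges_eq_Sigma: "spn_edges S = Sigma (nodes S) (\<lambda>v. set (ch S v))"
  unfolding spn_edges_def by auto

lemma card_spn_edges:
  assumes "spn_wf S"
  shows "card (spn_edges S) = (\<Sum>v\<in>nodes S. length (ch S v))"
proof -
  have "finite (nodes S)" and "\<forall>v\<in>nodes S. distinct (ch S v)"
    using assms by (auto simp: spn_wf_def)
  then show ?thesis
    unfolding spn_edges_eq_Sigma by (simp add: distinct_card)
qed

lemma in_scope_parent:
  assumes wf: "spn_wf S" and edge: "(v, u) \<in> spn_edges S" and u: "in_scope S u n"
  shows "in_scope S v n"
proof -
  have v: "v \<in> nodes S" and child: "u \<in> set (ch S v)"
    using edge by (simp_all add: spn_edges_def)
  have "is_internal S v"
    using wf v child by (auto simp: spn_wf_def)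
  then show ?thesis
    using v child u by (blast intro: in_scope.inner)
qed

lemma in_scope_ancestor:
  assumes wf: "spn_wf S" and "(v, u) \<in> (spn_edges S)\<^sup>*" and "in_scope S u n"
  shows "in_scope S v n"
  using assms(2,3)
  by (induction rule: converse_rtrancl_induct) (auto intro: in_scope_parent[OF wf])

lemma scope_subset_vars:
  assumes over: "spn_over N S" and v: "v \<in> nodes S"
  shows "scope S v \<subseteq> {1..N}"
proof -
  have wf: "spn_wf S" and root: "scope S (root S) = {1..N}"
    using over by (simp_all add: spn_over_def)
  have "(root S, v) \<in> (spn_edges S)\<^sup>*"
    using wf v by (simp add: spn_wf_def)
  then show ?thesis
    using in_scope_ancestor[OF wf] root by (auto simp: scope_def)
qed

definition leaf_var :: "node_kind \<Rightarrow> nat" where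
  "leaf_var k = (case k of Ind n b \<Rightarrow> n | Dist n p \<Rightarrow> n | _ \<Rightarrow> 0)"

lemma in_scope_leaf_var: "in_scope S v n \<Longrightarrow> n \<in> (\<lambda>u. leaf_var (kind S u)) ` nodes S"
  by (induction rule: in_scope.induct) (force simp: leaf_var_def)+

lemma card_vars_le_card_nodes:
  assumes over: "spn_over N S"
  shows "N \<le> card (nodes S)"
proof -
  have fin: "finite (nodes S)"
    using over by (simp add: spn_over_def spn_wf_def)
  have "{1..N} \<subseteq> (\<lambda>u. leaf_var (kind S u)) ` nodes S"
  proof
    fix n
    assume "n \<in> {1..N}"
    then have "n \<in> scope S (root S)"
      using over by (simp add: spn_over_def)
    then have "in_scope S (root S) n"
      by (simp add: scope_def)
    then show "n \<in> (\<lambda>u. leaf_var (kind S u)) ` nodes S"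
      by (rule in_scope_leaf_var)
  qed
  then have "card {1..N} \<le> card ((\<lambda>u. leaf_var (kind S u)) ` nodes S)"
    using fin by (intro card_mono) auto
  also have "\<dots> \<le> card (nodes S)"
    using fin by (rule card_image_le)
  finally show ?thesis
    by simp
qed

lemma sum_node_vars:
  assumes "normal_spn N S" and "v \<in> sum_nodes S"
  shows "2 \<le> N"
proof -
  have "2 \<le> card (scope S v)"
    using assms by (simp add: normal_spn_def sum_nodes_def)
  also have "\<dots> \<le> card {1..N}"
    using assms scope_subset_vars by (intro card_mono) (auto simp: normal_spn_def sum_nodes_def)
  finally show ?thesis
    by simp
qed

lemma contr_unique:
  assumes dec: "decomposable S"
  shows "contr S n u w \<Longrightarrow> contr S n u w' \<Longrightarrow> w' = w"
proof (induction arbitrary: w' rule: contr.induct)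
  case (stop u)
  from stop.prems stop.hyps show ?case
    by (cases rule: contr.cases) simp_all
next
  case (step u u' w)
  from step.prems obtain u'' where u'': "u'' \<in> set (ch S u)" "u'' \<in> nodes_with S n"
    and w': "contr S n u'' w'"
    using step.hyps(2) by (cases rule: contr.cases) auto
  have "u'' = u'"
  proof (rule ccontr)
    assume ne: "u'' \<noteq> u'"
    obtain i j where "i < length (ch S u)" "j < length (ch S u)"
      and "ch S u ! i = u'" "ch S u ! j = u''"
      using step.hyps(3) u''(1) by (auto simp: in_set_conv_nth)
    moreover have "u \<in> nodes S"
      using step.hyps(1) by (simp add: nodes_with_def)
    ultimately have "scope S u' \<inter> scope S u'' = {}"
      using dec step.hyps(2) ne unfolding decomposable_def by blast
    moreover have "n \<in> scope S u'" "n \<in> scope S u''"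
      using step.hyps(4) u''(2) by (simp_all add: nodes_with_def)
    ultimately show False
      by blast
  qed
  with w' show ?case
    by (simp add: step.IH)
qed

lemma add_size_var_add_le:
  assumes wf: "spn_wf S" and dec: "decomposable S"
  shows "add_size (var_add S n) \<le> spn_size S"
proof -
  have fin: "finite (nodes S)"
    using wf by (simp add: spn_wf_def)
  let ?labels = "Sigma (nodes S) (\<lambda>v. {..<length (ch S v)})"
  let ?label = "\<lambda>(v, i, w). (v, i)"
  have "inj_on ?label (add_edges (var_add S n))"
    using contr_unique[OF dec] by (auto simp: inj_on_def var_add_def)
  moreover have "?label ` add_edges (var_add S n) \<subseteq> ?labels"
    by (auto simp: var_add_def nodes_with_def)
  ultimately have "card (add_edges (var_add S n)) \<le> card ?labels"
    using fin by (intro card_inj_on_le) auto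
  also have "\<dots> = card (spn_edges S)"
    using fin by (simp add: card_spn_edges[OF wf])
  finally have "card (add_edges (var_add S n)) \<le> card (spn_edges S)" .
  moreover have "card (add_nodes (var_add S n)) \<le> card (nodes S)"
    using fin by (intro card_mono) (auto simp: var_add_def nodes_with_def)
  ultimately show ?thesis
    by (simp add: add_size_def spn_size_def)
qed

lemma add_size_stump_add: "add_size (stump_add S v) = 1 + 2 * length (ch S v)"
proof -
  have "{(None :: nat option, i, Some i) | i. i < length (ch S v)} =
        (\<lambda>i. (None, i, Some i)) ` {..<length (ch S v)}"
    by auto
  then have "card {(None :: nat option, i, Some i) | i. i < length (ch S v)} = length (ch S v)"
    by (simp add: card_image inj_on_def)
  then show ?thesis
    by (simp add: add_size_def stump_add_def card_image)
qed

lemma sum_add_size_stump_add_le: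
  assumes wf: "spn_wf S"
  shows "(\<Sum>v\<in>sum_nodes S. add_size (stump_add S v)) \<le> card (nodes S) + 2 * card (spn_edges S)"
proof -
  have fin: "finite (nodes S)"
    using wf by (simp add: spn_wf_def)
  have "(\<Sum>v\<in>sum_nodes S. add_size (stump_add S v)) \<le> (\<Sum>v\<in>nodes S. 1 + 2 * length (ch S v))"
    unfolding add_size_stump_add using fin by (intro sum_mono2) (auto simp: sum_nodes_def)
  also have "\<dots> = card (nodes S) + 2 * card (spn_edges S)"
    by (subst sum.distrib) (simp add: sum_distrib_left card_spn_edges[OF wf])
  finally show ?thesis .
qed

lemma card_bn_dag_nodes_le:
  assumes "finite (nodes S)"
  shows "card (bn_dag_nodes N S) \<le> N + card (nodes S)"
proof -
  have "card (bn_dag_nodes N S) \<le> card (Inl ` {1..N} :: (nat + nat) set) + card (Inr ` sum_nodes S :: (nat + nat) set)"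
    unfolding bn_dag_nodes_def by (rule card_Un_le)
  also have "\<dots> \<le> N + card (nodes S)"
    using assms by (simp add: card_image card_mono sum_nodes_def)
  finally show ?thesis .
qed

lemma card_bn_dag_edges_le:
  assumes over: "spn_over N S"
  shows "card (bn_dag_edges S) \<le> N * card (nodes S)"
proof -
  have fin: "finite (nodes S)"
    using over by (simp add: spn_over_def spn_wf_def)
  have "bn_dag_edges S \<subseteq> (\<lambda>(v, n). (Inr v, Inl n)) ` (nodes S \<times> {1..N})"
    using scope_subset_vars[OF over]
    by (fastforce simp: bn_dag_edges_def sum_nodes_def intro: rev_image_eqI)
  then have "card (bn_dag_edges S) \<le> card (nodes S \<times> {1..N})"
    using fin by (intro surj_card_le) auto
  then show ?thesis
    by (simp add: card_cartesian_product mult.commute)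
qed

lemma bn_size_le:
  assumes normal: "normal_spn N S"
  shows "bn_size N S \<le> 6 * N * spn_size S"
proof (cases "N = 0")
  case True
  then have "sum_nodes S = {}"
    using sum_node_vars[OF normal] by fastforce
  with True show ?thesis
    by (simp add: bn_size_def bn_dag_nodes_def bn_dag_edges_def)
next
  case False
  have over: "spn_over N S" and wf: "spn_wf S" and dec: "decomposable S"
    using normal by (simp_all add: normal_spn_def spn_over_def)
  have fin: "finite (nodes S)"
    using wf by (simp add: spn_wf_def)
  let ?n = "card (nodes S)" and ?e = "card (spn_edges S)"
  have "bn_size N S \<le> (N + ?n) + N * ?n + (?n + 2 * ?e) + N * spn_size S"
    using card_bn_dag_nodes_le[OF fin, of N] card_bn_dag_edges_le[OF over]
      sum_add_size_stump_add_le[OF wf] add_size_var_add_le[OF wf dec]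
      sum_mono[of "{1..N}" "\<lambda>n. add_size (var_add S n)" "\<lambda>_. spn_size S"]
    unfolding bn_size_def by fastforce
  also have "\<dots> \<le> 6 * N * spn_size S"
  proof -
    have "N \<le> N * ?n" "?n \<le> N * ?n" "?e \<le> N * ?e"
      using False card_vars_le_card_nodes[OF over] by simp_all
    then show ?thesis
      unfolding spn_size_def by (simp only: distrib_left mult.assoc)
  qed
  finally show ?thesis .
qed

theorem theorem5:
  shows "\<exists>c::real. \<forall>(N::nat) (S::spn). normal_spn N S \<longrightarrow>
           real (bn_size N S) \<le> c * real N * real (spn_size S)"
proof (intro exI[of _ 6] allI impI)
  fix N S
  assume "normal_spn N S"
  then have "real (bn_size N S) \<le> real (6 * N * spn_size S)"
    using bn_size_le of_nat_mono by blast
  then show "real (bn_size N S) \<le> 6 * real N * real (spn_size S)"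
    by simp
qed

end
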